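(* Let $0<\alpha_o<2$ and let $f:(\alpha_o,2]\to[0,\infty)$ be a measurable probability density, i.e. $\int_{\alpha_o}^2 f(q)\,dq=1$. Assume there is $\beta>0$ such that $f(t+\alpha_o)>0$ for all sufficiently small $t>0$ and, for every $p>0$, $$\lim_{t\to 0^+}\frac{f(tp+\alpha_o)}{f(t+\alpha_o)}=p^{\beta}.$$ For integers $n\ge 2$ and $y\in\mathbb{R}^d\setminus\{0\}$ define $$I(n,y):=\int_{\alpha_o}^{2}|y|^{-1-q}\,n^{1-q/\alpha_o}\,f(q)\,dq ,\qquad \tilde g(n):=f\!\left(\frac{\alpha_o}{\log n}+\alpha_o\right)\frac{\alpha_o}{\log n}\,\Gamma(\beta+1),$$ and $E(n,y):=I(n,y)-\tilde g(n)\,|y|^{-1-\alpha_o}$. Then for every $\delta>0$, $$\lim_{n\to\infty}\ \sup_{|y|\ge\delta}\ \frac{|E(n,y)|}{\tilde g(n)}=0,$$ that is, $\tilde g(n)^{-1}I(n,y)\to|y|^{-1-\alpha_o}$ as $n\to\infty$, uniformly in $y$ outside any ball centered at $0$.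
   Context: In the original setting, $f=F'_\alpha$ is the density of the distribution function $F_\alpha:=\pi\circ\alpha^{-1}$, the image of a probability measure $\pi$ under a stability-index function $\alpha$ taking values in $[\alpha_o,2]$, where $\alpha_o$ is its minimal value. $\Gamma$ denotes the Gamma function and $\log$ the natural logarithm. *)

theory Defs
  imports "HOL-Analysis.Analysis"
begin

definition Iint :: "real \<Rightarrow> (real \<Rightarrow> real) \<Rightarrow> nat \<Rightarrow> 'a::real_normed_vector \<Rightarrow> real" where
  "Iint ao f n y = (LINT q:{ao<..2}|lborel. norm y powr (-1 - q) * real n powr (1 - q / ao) * f q)"

definition gtilde :: "real \<Rightarrow> (real \<Rightarrow> real) \<Rightarrow> real \<Rightarrow> nat \<Rightarrow> real" where
  "gtilde ao f \<beta> n = f (ao / ln (real n) + ao) * (ao / ln (real n)) * Gamma (\<beta> + 1)"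

definition Eerr :: "real \<Rightarrow> (real \<Rightarrow> real) \<Rightarrow> real \<Rightarrow> nat \<Rightarrow> 'a::real_normed_vector \<Rightarrow> real" where
  "Eerr ao f \<beta> n y = Iint ao f n y - gtilde ao f \<beta> n * norm y powr (-1 - ao)"

end

theory Submission
  imports Defs "HOL-Real_Asymp.Real_Asymp"
begin

(* Write q = a + s and e = a / ln n, so that n powr (1 - q/a) = exp (-s/e)
   and I(n,y) is a Laplace-type integral of the shifted density h s = f (a + s) near s = 0.
   Regular variation of h at 0 with index beta gives, via Potter's bounds and dominated
   convergence, the moment asymptotics
       int_0^t0 s^k exp (-s/e) h s ds  ~  e^(k+1) h e Gamma (beta + k + 1)      (e -> 0+).
   Splitting the integral at a + t0, the error E(n,y) is bounded uniformly in |y| >= delta by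
   three terms: the relative error of the zeroth moment, the first moment (coming from the
   Lipschitz dependence of |y| powr (-1-q) on q), and an exponentially small tail; all three
   are o(e h e) by the asymptotics above. *)

lemma Gamma_set_integral:
  fixes a :: real assumes a: "a > 0"
  shows "set_integrable lborel {0..} (\<lambda>t. t powr (a - 1) / exp t)"
    and "(LINT t:{0..}|lborel. t powr (a - 1) / exp t) = Gamma a"
proof -
  have hk: "((\<lambda>t. t powr (a - 1) / exp t) has_integral Gamma a) {0..}"
    using Gamma_integral_real[OF a] .
  have ai: "(\<lambda>t. t powr (a - 1) / exp t) absolutely_integrable_on {0..}"
    using hk by (intro nonnegative_absolutely_integrable_1) (auto simp: has_integral_integrable)
  have m: "(\<lambda>t. indicat_real {0..} t *\<^sub>R (t powr (a - 1) / exp t)) \<in> borel_measurable lborel"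
    by measurable
  show si: "set_integrable lborel {0..} (\<lambda>t. t powr (a - 1) / exp t)"
    using ai m unfolding set_integrable_def
    using integrable_completion by (metis measurable_lborel1)
  show "(LINT t:{0..}|lborel. t powr (a - 1) / exp t) = Gamma a"
    using set_borel_integral_eq_integral(2)[OF si] hk by (simp add: integral_unique)
qed

lemma large_subsets_intersect:
  fixes M :: "'a measure"
  assumes sub: "A \<subseteq> S" "B \<subseteq> S" and sets: "A \<in> sets M" "B \<in> sets M" "S \<in> sets M"
    and fin: "emeasure M S < \<infinity>"
    and big: "measure M A + measure M B > measure M S"
  shows "A \<inter> B \<noteq> {}"
proof
  assume dis: "A \<inter> B = {}"
  have finsub: "emeasure M T \<noteq> \<infinity>" if "T \<subseteq> S" "T \<in> sets M" for T
    using emeasure_mono[OF that(1) sets(3)] fin by (auto simp: top_unique)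
  have "measure M (A \<union> B) = measure M A + measure M B"
    by (rule measure_Union) (use finsub sub sets dis in auto)
  moreover have "measure M (A \<union> B) \<le> measure M S"
    by (rule measure_mono_fmeasurable) (use sub sets fin in \<open>auto simp: fmeasurable_def\<close>)
  ultimately show False using big by linarith
qed

text \<open>If \<open>\<psi>(x + v) - \<psi>(x) \<rightarrow> 0\<close> for every fixed shift \<open>v\<close>, then along any sequence \<open>z\<^sub>m \<rightarrow> \<infinity>\<close>
  the set of shifts in \<open>[0,L]\<close> that stay \<open>1/2\<close>-close from index \<open>N\<close> on exhausts \<open>[0,L]\<close>
  in measure as \<open>N \<rightarrow> \<infinity>\<close> (continuity of measure from below).\<close>
lemma measure_of_stably_close_shifts:
  fixes \<psi> :: "real \<Rightarrow> real" and zs :: "nat \<Rightarrow> real"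
  assumes meas[measurable]: "\<psi> \<in> borel_measurable borel"
    and conv: "\<And>v. ((\<lambda>x. \<psi> (x + v) - \<psi> x) \<longlongrightarrow> 0) at_top"
    and zs: "\<And>n. zs n \<ge> real n" and L: "L \<ge> 0"
  shows "(\<lambda>N. measure lborel {v\<in>{0..L}. \<forall>m\<ge>N. \<bar>\<psi> (zs m + v) - \<psi> (zs m)\<bar> < 1/2}) \<longlonglongrightarrow> L"
    and "{v\<in>{0..L}. \<forall>m\<ge>N. \<bar>\<psi> (zs m + v) - \<psi> (zs m)\<bar> < 1/2} \<in> sets lborel"
proof -
  define A where "A N = {v\<in>{0..L}. \<forall>m\<ge>N. \<bar>\<psi> (zs m + v) - \<psi> (zs m)\<bar> < 1/2}" for N
  have As: "A N \<in> sets lborel" for N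
    unfolding A_def by measurable
  then show "{v\<in>{0..L}. \<forall>m\<ge>N. \<bar>\<psi> (zs m + v) - \<psi> (zs m)\<bar> < 1/2} \<in> sets lborel"
    unfolding A_def .
  have inc: "incseq A" unfolding incseq_def A_def by auto
  have zlim: "filterlim zs at_top sequentially"
    by (rule filterlim_at_top_mono[OF filterlim_real_sequentially]) (auto simp: zs)
  have U: "(\<Union>N. A N) = {0..L}"
  proof
    show "(\<Union>N. A N) \<subseteq> {0..L}" unfolding A_def by auto
    show "{0..L} \<subseteq> (\<Union>N. A N)"
    proof
      fix v assume v: "v \<in> {0..L}"
      have "((\<lambda>m. \<psi> (zs m + v) - \<psi> (zs m)) \<longlonglongrightarrow> 0)"
        using filterlim_compose[OF conv[of v] zlim] by simp
      then have "\<forall>\<^sub>F m in sequentially. \<bar>\<psi> (zs m + v) - \<psi> (zs m)\<bar> < 1/2"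
        by (rule order_tendstoD(2)[OF tendsto_rabs_zero, simplified]) simp
      then obtain N where "\<forall>m\<ge>N. \<bar>\<psi> (zs m + v) - \<psi> (zs m)\<bar> < 1/2"
        by (auto simp: eventually_sequentially)
      then show "v \<in> (\<Union>N. A N)" using v unfolding A_def by auto
    qed
  qed
  have "(\<lambda>N. measure lborel (A N)) \<longlonglongrightarrow> measure lborel (\<Union>N. A N)"
    by (rule Lim_measure_incseq) (use As inc U L in \<open>auto simp: emeasure_lborel_Icc\<close>)
  then show "(\<lambda>N. measure lborel {v\<in>{0..L}. \<forall>m\<ge>N. \<bar>\<psi> (zs m + v) - \<psi> (zs m)\<bar> < 1/2}) \<longlonglongrightarrow> L"
    using U L by (simp add: A_def)
qed

text \<open>Uniform convergence theorem, in the weak form needed here: an additively slowly varying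
  measurable function has eventually bounded oscillation on unit intervals.  If not, there are
  \<open>x\<^sub>n \<ge> n\<close>, \<open>u\<^sub>n \<in> [0,1]\<close> with \<open>|\<psi>(x\<^sub>n+u\<^sub>n) - \<psi>(x\<^sub>n)| > 1\<close>; the sets of good shifts from \<open>x\<^sub>N\<close>
  and (translated by \<open>u\<^sub>N\<close>) from \<open>x\<^sub>N+u\<^sub>N\<close> are too large to be disjoint in \<open>[0,3]\<close>, and a common
  point gives a contradiction.\<close>
lemma additive_oscillation_bound:
  fixes \<psi> :: "real \<Rightarrow> real"
  assumes meas[measurable]: "\<psi> \<in> borel_measurable borel"
    and conv: "\<And>v. ((\<lambda>x. \<psi> (x + v) - \<psi> x) \<longlongrightarrow> 0) at_top"
  shows "\<exists>X. \<forall>x\<ge>X. \<forall>u\<in>{0..1}. \<bar>\<psi> (x+u) - \<psi> x\<bar> \<le> 1"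
proof (rule ccontr)
  assume "\<not> ?thesis"
  then have "\<forall>n::nat. \<exists>x u. x \<ge> real n \<and> u \<in> {0..1} \<and> \<bar>\<psi> (x+u) - \<psi> x\<bar> > 1"
    by (meson not_le)
  then obtain xs us where xu: "\<And>n. xs n \<ge> real n \<and> us n \<in> {0..1} \<and> \<bar>\<psi> (xs n + us n) - \<psi> (xs n)\<bar> > 1"
    by metis
  define ys where "ys n = xs n + us n" for n
  have ys: "ys n \<ge> real n" for n using xu[of n] by (auto simp: ys_def)
  define U where "U N = {v\<in>{0..3}. \<forall>m\<ge>N. \<bar>\<psi> (xs m + v) - \<psi> (xs m)\<bar> < 1/2}" for N
  define V where "V N = {v\<in>{0..2}. \<forall>m\<ge>N. \<bar>\<psi> (ys m + v) - \<psi> (ys m)\<bar> < 1/2}" for N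
  have Ul: "(\<lambda>N. measure lborel (U N)) \<longlonglongrightarrow> 3" and Us: "\<And>N. U N \<in> sets lborel"
    unfolding U_def using measure_of_stably_close_shifts[OF meas conv, of xs 3] xu by auto
  have Vl: "(\<lambda>N. measure lborel (V N)) \<longlonglongrightarrow> 2" and Vs: "\<And>N. V N \<in> sets lborel"
    unfolding V_def using measure_of_stably_close_shifts[OF meas conv, of ys 2] ys by auto
  have "\<forall>\<^sub>F N in sequentially. measure lborel (U N) > 5/2 \<and> measure lborel (V N) > 3/2"
    using order_tendstoD(1)[OF Ul, of "5/2"] order_tendstoD(1)[OF Vl, of "3/2"]
    by (auto intro: eventually_conj)
  then obtain N where mU: "measure lborel (U N) > 5/2" and mV: "measure lborel (V N) > 3/2"
    by (auto dest: eventually_happens)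
  define W where "W = (+) (us N) ` V N"
  have mW: "measure lebesgue W = measure lborel (V N)"
    unfolding W_def using measure_translation[of "us N" "V N"] Vs by (simp add: measure_completion)
  have "U N \<inter> W \<noteq> {}"
  proof (rule large_subsets_intersect[where M = lebesgue and S = "{0..3}"])
    show "U N \<subseteq> {0..3}" by (auto simp: U_def)
    show "W \<subseteq> {0..3}" using xu[of N] by (auto simp: W_def V_def)
    show "U N \<in> sets lebesgue" using Us by auto
    show "W \<in> sets lebesgue" unfolding W_def
      by (rule lebesgue_sets_translation) (use Vs in auto)
    show "measure lebesgue {0..3::real} < measure lebesgue (U N) + measure lebesgue W"
      using mU mV mW Us by (simp add: measure_completion)
  qed auto
  then obtain v where vU: "v \<in> U N" and vW: "v \<in> W" by blast
  then obtain w where w: "w \<in> V N" "v = us N + w" by (auto simp: W_def)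
  have 1: "\<bar>\<psi> (xs N + v) - \<psi> (xs N)\<bar> < 1/2" using vU by (auto simp: U_def)
  have 2: "\<bar>\<psi> (ys N + w) - \<psi> (ys N)\<bar> < 1/2" using w by (auto simp: V_def)
  have "ys N + w = xs N + v" using w by (simp add: ys_def)
  with 1 2 have "\<bar>\<psi> (ys N) - \<psi> (xs N)\<bar> < 1" by (simp only: )
  with xu[of N] show False by (simp add: ys_def)
qed

text \<open>Chaining unit steps: bounded oscillation on unit intervals beyond \<open>X\<close> gives at most
  linear growth of the increments beyond \<open>X\<close>.\<close>
lemma oscillation_linear_bound:
  fixes \<psi> :: "real \<Rightarrow> real"
  assumes X: "\<forall>x\<ge>X. \<forall>u\<in>{0..1}. \<bar>\<psi> (x+u) - \<psi> x\<bar> \<le> 1"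
    and x: "x \<ge> X" and y: "y \<ge> X"
  shows "\<bar>\<psi> y - \<psi> x\<bar> \<le> \<bar>y - x\<bar> + 1"
proof -
  have steps: "\<forall>x\<ge>X. \<forall>u\<in>{0..real n}. \<bar>\<psi> (x+u) - \<psi> x\<bar> \<le> real n" for n :: nat
  proof (induction n)
    case 0 then show ?case by simp
  next
    case (Suc n)
    show ?case
    proof (intro allI impI ballI)
      fix x u assume x: "x \<ge> X" and u: "u \<in> {0..real (Suc n)}"
      show "\<bar>\<psi> (x+u) - \<psi> x\<bar> \<le> real (Suc n)"
      proof (cases "u \<le> 1")
        case True then show ?thesis using X x u by force
      next
        case False
        have a: "\<bar>\<psi> (x+1) - \<psi> x\<bar> \<le> 1" using X x by force
        have b: "\<bar>\<psi> ((x+1)+(u-1)) - \<psi> (x+1)\<bar> \<le> real n"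
          using x u False by (intro Suc.IH[rule_format]) auto
        show ?thesis using a b by (simp add: abs_le_iff)
      qed
    qed
  qed
  have ordered: "\<bar>\<psi> y - \<psi> x\<bar> \<le> \<bar>y - x\<bar> + 1" if "x \<ge> X" "y \<ge> X" "x \<le> y" for x y
  proof -
    define n where "n = nat \<lceil>y - x\<rceil>"
    have "y - x \<le> real n" "real n \<le> y - x + 1" using that by (auto simp: n_def)
    then have "\<bar>\<psi> (x + (y-x)) - \<psi> x\<bar> \<le> real n" using that by (intro steps[rule_format]) auto
    then show ?thesis using \<open>real n \<le> y - x + 1\<close> that by simp
  qed
  show ?thesis
    using ordered[OF x y] ordered[OF y x] by (cases "x \<le> y") (auto simp: abs_minus_commute)
qed

text \<open>Additive (logarithmic) form of a function \<open>h\<close> regularly varying at \<open>0\<close> with index \<open>\<beta>\<close>: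
  \<open>h(e\<^sup>-\<^sup>x) = exp (\<psi>(x) - \<beta> x)\<close>, where \<open>\<psi>\<close> is additively slowly varying at \<open>\<infinity>\<close>.\<close>
definition log_profile :: "(real \<Rightarrow> real) \<Rightarrow> real \<Rightarrow> real \<Rightarrow> real" where
  "log_profile h \<beta> x = ln (h (exp (- x))) + \<beta> * x"

lemma exp_neg_at_right_0: "filterlim (\<lambda>x::real. exp (- x)) (at_right 0) at_top"
  by real_asymp

lemma log_profile_shift_tendsto:
  fixes h :: "real \<Rightarrow> real"
  assumes hpos: "\<forall>\<^sub>F t in at_right 0. 0 < h t"
    and hrv: "\<And>p. 0 < p \<Longrightarrow> ((\<lambda>t. h (t * p) / h t) \<longlongrightarrow> p powr \<beta>) (at_right 0)"
  shows "((\<lambda>x. log_profile h \<beta> (x + v) - log_profile h \<beta> x) \<longlongrightarrow> 0) at_top"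
proof -
  define p where "p = exp (- v)"
  have p: "p > 0" by (simp add: p_def)
  have hpos': "\<forall>\<^sub>F x in at_top. 0 < h (exp (- x))"
    using filterlim_iff[THEN iffD1, OF exp_neg_at_right_0, rule_format, OF hpos] .
  have "((\<lambda>x. h (exp (- x) * p) / h (exp (- x))) \<longlongrightarrow> p powr \<beta>) at_top"
    using filterlim_compose[OF hrv[OF p] exp_neg_at_right_0] .
  then have "((\<lambda>x. ln (h (exp (- x) * p) / h (exp (- x))) + \<beta> * v) \<longlongrightarrow> ln (p powr \<beta>) + \<beta> * v) at_top"
    using p by (intro tendsto_intros) auto
  moreover have "ln (p powr \<beta>) + \<beta> * v = 0" using p by (simp add: p_def ln_powr)
  moreover have "\<forall>\<^sub>F x in at_top. ln (h (exp (- x) * p) / h (exp (- x))) + \<beta> * v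
                   = log_profile h \<beta> (x + v) - log_profile h \<beta> x"
  proof -
    have "\<forall>\<^sub>F x in at_top. 0 < h (exp (- (v + x)))"
      using filterlim_iff[THEN iffD1, OF filterlim_tendsto_add_at_top[OF tendsto_const filterlim_ident],
          rule_format, OF hpos'] .
    then show ?thesis using hpos'
    proof eventually_elim
      case (elim x)
      have e: "h (exp (- x) * p) = h (exp (- (v + x)))"
        by (simp add: p_def exp_add[symmetric] add.commute)
      have "ln (h (exp (- x) * p) / h (exp (- x))) = ln (h (exp (- (v + x)))) - ln (h (exp (- x)))"
        using elim by (simp only: e ln_div) simp
      then show ?case by (simp add: log_profile_def algebra_simps)
    qed
  qed
  ultimately show ?thesis by (simp add: tendsto_cong)
qed

lemma exp_bounds_from_log_estimate:
  fixes L \<beta> r :: real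
  assumes r: "r > 0" and kL: "\<bar>L - \<beta> * ln r\<bar> \<le> \<bar>ln r\<bar> + 1"
  shows "exp L \<le> exp 1 * (r powr (\<beta>+1) + r powr (\<beta>-1))"
    and "exp (-1) * r powr \<beta> / (r + 1 / r) \<le> exp L"
proof -
  have ea: "exp \<bar>ln r\<bar> \<le> r + 1 / r"
  proof (cases "r \<ge> 1")
    case True then show ?thesis using r by simp
  next
    case False
    then have "exp \<bar>ln r\<bar> = 1 / r" using r by (simp add: exp_minus inverse_eq_divide)
    then show ?thesis using r by simp
  qed
  have rp: "exp (\<beta> * ln r) = r powr \<beta>" using r by (simp add: powr_def)
  have "exp L \<le> exp (1 + \<beta> * ln r + \<bar>ln r\<bar>)" using kL by simp
  also have "\<dots> = exp 1 * (r powr \<beta> * exp \<bar>ln r\<bar>)" by (simp add: exp_add rp)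
  also have "\<dots> \<le> exp 1 * (r powr \<beta> * (r + 1 / r))"
    using ea r by (intro mult_left_mono) auto
  also have "r powr \<beta> * (r + 1 / r) = r powr (\<beta>+1) + r powr (\<beta>-1)"
    using r by (simp add: powr_add powr_diff distrib_left divide_simps)
  finally show "exp L \<le> exp 1 * (r powr (\<beta>+1) + r powr (\<beta>-1))" .
  have "exp (-1) * r powr \<beta> / (r + 1 / r) \<le> exp (-1) * r powr \<beta> / exp \<bar>ln r\<bar>"
    using ea r by (intro divide_left_mono) (auto intro!: mult_pos_pos add_pos_pos)
  also have "\<dots> = exp (-1 + \<beta> * ln r - \<bar>ln r\<bar>)" by (simp only: rp[symmetric] exp_add exp_diff)
  also have "\<dots> \<le> exp L" using kL by simp
  finally show "exp (-1) * r powr \<beta> / (r + 1 / r) \<le> exp L" .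
qed

lemma potter_bounds:
  fixes h :: "real \<Rightarrow> real" and \<beta> T :: real
  assumes hm[measurable]: "h \<in> borel_measurable borel"
    and hpos: "\<forall>\<^sub>F t in at_right 0. 0 < h t"
    and hrv: "\<And>p. 0 < p \<Longrightarrow> ((\<lambda>t. h (t * p) / h t) \<longlongrightarrow> p powr \<beta>) (at_right 0)"
    and T: "T > 0"
  shows "\<exists>t0>0. t0 \<le> T \<and> (\<forall>s\<in>{0<..t0}. 0 < h s) \<and>
     (\<forall>s\<in>{0<..t0}. \<forall>t\<in>{0<..t0}.
        h s / h t \<le> exp 1 * ((s/t) powr (\<beta>+1) + (s/t) powr (\<beta>-1)) \<and>
        exp (-1) * (s/t) powr \<beta> / (s/t + t/s) \<le> h s / h t)"
proof -
  have \<psi>m: "log_profile h \<beta> \<in> borel_measurable borel"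
    unfolding log_profile_def[abs_def] by measurable
  obtain X where X: "\<forall>x\<ge>X. \<forall>u\<in>{0..1}. \<bar>log_profile h \<beta> (x+u) - log_profile h \<beta> x\<bar> \<le> 1"
    using additive_oscillation_bound[OF \<psi>m log_profile_shift_tendsto[OF hpos hrv]] by blast
  obtain b where b: "b > 0" "\<forall>t. 0 < t \<longrightarrow> t < b \<longrightarrow> 0 < h t"
    using hpos by (auto simp: eventually_at_right_field)
  define t0 where "t0 = min (min (exp (- X)) (b/2)) T"
  have t0: "t0 > 0" "t0 \<le> T" using b T by (auto simp: t0_def)
  have hp: "\<forall>s\<in>{0<..t0}. 0 < h s" using b by (auto simp: t0_def)
  have bounds: "h s / h t \<le> exp 1 * ((s/t) powr (\<beta>+1) + (s/t) powr (\<beta>-1)) \<and>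
        exp (-1) * (s/t) powr \<beta> / (s/t + t/s) \<le> h s / h t"
    if s: "s \<in> {0<..t0}" and t: "t \<in> {0<..t0}" for s t
  proof -
    have sX: "- ln s \<ge> X" using s ln_le_cancel_iff[of s "exp (-X)"] by (auto simp: t0_def)
    have tX: "- ln t \<ge> X" using t ln_le_cancel_iff[of t "exp (-X)"] by (auto simp: t0_def)
    have hs: "h s > 0" "h t > 0" using hp s t by auto
    have "\<bar>log_profile h \<beta> (- ln s) - log_profile h \<beta> (- ln t)\<bar> \<le> \<bar>- ln s - - ln t\<bar> + 1"
      by (rule oscillation_linear_bound[OF X tX sX])
    then have key: "\<bar>ln (h s / h t) - \<beta> * ln (s / t)\<bar> \<le> \<bar>ln (s / t)\<bar> + 1"
      using s t hs by (simp add: log_profile_def ln_div algebra_simps)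
    have "s / t > 0" "t / s = 1 / (s / t)" "exp (ln (h s / h t)) = h s / h t"
      using s t hs by auto
    then show ?thesis using exp_bounds_from_log_estimate[OF _ key] by metis
  qed
  show ?thesis using t0 hp bounds by blast
qed

lemma laplace_substitution:
  fixes h :: "real \<Rightarrow> real" and \<epsilon> a t0 :: real and k :: nat
  assumes eps: "\<epsilon> > 0" and hne: "h \<epsilon> \<noteq> 0"
  shows "(LINT q:{a<..a+t0}|lborel. (q - a) ^ k * exp (- (q - a) / \<epsilon>) * h (q - a))
     = \<epsilon> ^ (k+1) * h \<epsilon> * integral\<^sup>L lborel (\<lambda>p. indicator {0<..t0 / \<epsilon>} p * (p ^ k * exp (- p) * (h (\<epsilon> * p) / h \<epsilon>)))"
proof -
  have "(LINT q:{a<..a+t0}|lborel. (q - a) ^ k * exp (- (q - a) / \<epsilon>) * h (q - a))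
      = integral\<^sup>L lborel (\<lambda>q. indicator {a<..a+t0} q * ((q - a) ^ k * exp (- (q - a) / \<epsilon>) * h (q - a)))"
    by (simp add: set_lebesgue_integral_def)
  also have "\<dots> = \<bar>\<epsilon>\<bar> *\<^sub>R integral\<^sup>L lborel (\<lambda>p. indicator {a<..a+t0} (a + \<epsilon> * p) * ((a + \<epsilon> * p - a) ^ k * exp (- (a + \<epsilon> * p - a) / \<epsilon>) * h (a + \<epsilon> * p - a)))"
    using eps by (intro lborel_integral_real_affine) simp
  also have "(\<lambda>p. indicator {a<..a+t0} (a + \<epsilon> * p) * ((a + \<epsilon> * p - a) ^ k * exp (- (a + \<epsilon> * p - a) / \<epsilon>) * h (a + \<epsilon> * p - a)))
      = (\<lambda>p. (\<epsilon> ^ k * h \<epsilon>) * (indicator {0<..t0 / \<epsilon>} p * (p ^ k * exp (- p) * (h (\<epsilon> * p) / h \<epsilon>))))"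
  proof
    fix p
    have i: "indicator {a<..a+t0} (a + \<epsilon> * p) = (indicator {0<..t0 / \<epsilon>} p :: real)"
      using eps by (simp add: indicator_def field_simps zero_less_mult_iff)
    show "indicator {a<..a+t0} (a + \<epsilon> * p) * ((a + \<epsilon> * p - a) ^ k * exp (- (a + \<epsilon> * p - a) / \<epsilon>) * h (a + \<epsilon> * p - a))
      = (\<epsilon> ^ k * h \<epsilon>) * (indicator {0<..t0 / \<epsilon>} p * (p ^ k * exp (- p) * (h (\<epsilon> * p) / h \<epsilon>)))"
      unfolding i using eps hne by (simp add: power_mult_distrib)
  qed
  also have "integral\<^sup>L lborel (\<lambda>p. (\<epsilon> ^ k * h \<epsilon>) * (indicator {0<..t0 / \<epsilon>} p * (p ^ k * exp (- p) * (h (\<epsilon> * p) / h \<epsilon>))))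
     = (\<epsilon> ^ k * h \<epsilon>) * integral\<^sup>L lborel (\<lambda>p. indicator {0<..t0 / \<epsilon>} p * (p ^ k * exp (- p) * (h (\<epsilon> * p) / h \<epsilon>)))"
    by (rule integral_mult_right_zero)
  finally show ?thesis using eps by (simp only: real_scaleR_def abs_of_pos power_Suc mult.assoc Suc_eq_plus1[symmetric])
qed

text \<open>The integrable majorant supplied by Potter's upper bound: a sum of two \<open>\<Gamma>\<close>-densities.\<close>
lemma gamma_majorant_integrable:
  fixes c :: real assumes c: "c > 0"
  shows "integrable lborel (\<lambda>p. indicator {0..} p * (exp 1 * (p powr (c + 1) / exp p + p powr (c - 1) / exp p)))"
proof -
  have "set_integrable lborel {0..} (\<lambda>p. p powr (c + 1) / exp p)"
    using Gamma_set_integral(1)[of "c + 2"] c by (simp add: add.commute)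
  moreover have "set_integrable lborel {0..} (\<lambda>p. p powr (c - 1) / exp p)"
    using Gamma_set_integral(1)[OF c] .
  ultimately have "set_integrable lborel {0..} (\<lambda>p. exp 1 * (p powr (c + 1) / exp p + p powr (c - 1) / exp p))"
    by (intro set_integrable_mult_right set_integral_add(1))
  then show ?thesis by (simp add: set_integrable_def)
qed

text \<open>Core of the moment asymptotics: for \<open>\<epsilon>\<^sub>n \<rightarrow> 0+\<close>,
  \<open>\<integral>\<^sub>0\<^sup>t\<^sup>0\<^sup>/\<^sup>\<epsilon> p\<^sup>k e\<^sup>-\<^sup>p h(\<epsilon> p)/h(\<epsilon>) dp \<rightarrow> \<Gamma>(\<beta>+k+1)\<close>, by dominated convergence: pointwise the ratio
  tends to \<open>p\<^sup>\<beta>\<close>, and Potter's upper bound provides the majorant.\<close>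
lemma scaled_gamma_integral_limit:
  fixes h :: "real \<Rightarrow> real" and e :: "nat \<Rightarrow> real" and k :: nat
  assumes hm[measurable]: "h \<in> borel_measurable borel"
    and hrv: "\<And>p. 0 < p \<Longrightarrow> ((\<lambda>t. h (t * p) / h t) \<longlongrightarrow> p powr \<beta>) (at_right 0)"
    and t0: "t0 > 0" and hp: "\<forall>s\<in>{0<..t0}. 0 < h s"
    and pu: "\<forall>s\<in>{0<..t0}. \<forall>t\<in>{0<..t0}. h s / h t \<le> exp 1 * ((s/t) powr (\<beta>+1) + (s/t) powr (\<beta>-1))"
    and \<beta>: "\<beta> > 0"
    and epos: "\<And>n. e n > 0" and ele: "\<And>n. e n \<le> t0" and elim: "e \<longlonglongrightarrow> 0"
  shows "(\<lambda>n. integral\<^sup>L lborel (\<lambda>p. indicator {0<..t0 / e n} p * (p ^ k * exp (- p) * (h (e n * p) / h (e n)))))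
           \<longlonglongrightarrow> Gamma (\<beta> + k + 1)"
proof -
  define S where "S n p = indicator {0<..t0 / e n} p * (p ^ k * exp (- p) * (h (e n * p) / h (e n)))" for n p
  define \<Phi> where "\<Phi> p = indicator {0..} p * (p powr (\<beta> + k + 1 - 1) / exp p)" for p :: real
  define W where "W p = indicator {0..} p * (exp 1 * (p powr (\<beta> + k + 1) / exp p + p powr (\<beta> + k - 1) / exp p))" for p :: real
  have eright: "filterlim e (at_right 0) sequentially"
    using elim epos by (intro tendsto_imp_filterlim_at_right) (auto intro: always_eventually)
  have \<Phi>int: "integral\<^sup>L lborel \<Phi> = Gamma (\<beta> + k + 1)"
    using Gamma_set_integral(2)[of "\<beta> + k + 1"] \<beta> by (simp add: \<Phi>_def[abs_def] set_lebesgue_integral_def)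
  have lim: "(\<lambda>n. S n p) \<longlonglongrightarrow> \<Phi> p" for p
  proof (cases "p > 0")
    case False
    then have "S n p = 0" for n by (auto simp: S_def)
    moreover have "\<Phi> p = 0" using False by (cases "p = 0") (auto simp: \<Phi>_def)
    ultimately show ?thesis by simp
  next
    case True
    have r: "(\<lambda>n. h (e n * p) / h (e n)) \<longlonglongrightarrow> p powr \<beta>"
      using filterlim_compose[OF hrv[OF True] eright] .
    have "\<forall>\<^sub>F n in sequentially. S n p = p ^ k * exp (- p) * (h (e n * p) / h (e n))"
    proof -
      have "\<forall>\<^sub>F n in sequentially. e n < t0 / p"
        using order_tendstoD(2)[OF elim, of "t0 / p"] t0 True by simp
      then show ?thesis
      proof eventually_elim
        case (elim n)
        then have "p \<le> t0 / e n" using epos[of n] True by (simp add: field_simps)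
      then show ?case using True by (simp add: S_def)
      qed
    qed
    moreover have "(\<lambda>n. p ^ k * exp (- p) * (h (e n * p) / h (e n))) \<longlonglongrightarrow> p ^ k * exp (- p) * p powr \<beta>"
      by (intro tendsto_intros r)
    moreover have "p ^ k * exp (- p) * p powr \<beta> = \<Phi> p"
      using True by (simp add: \<Phi>_def powr_add powr_realpow[symmetric] exp_minus field_simps)
    ultimately show ?thesis by (simp add: tendsto_cong)
  qed
  have bound: "norm (S n p) \<le> W p" for n p
  proof (cases "p \<in> {0<..t0 / e n}")
    case False
    then show ?thesis by (simp add: S_def W_def)
  next
    case True
    have p: "p > 0" "e n * p \<le> t0" using True epos[of n] by (auto simp: field_simps)
    have s: "e n * p \<in> {0<..t0}" and t: "e n \<in> {0<..t0}" using p epos[of n] ele[of n] by auto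
    have "h (e n * p) > 0" "h (e n) > 0" using hp s t by auto
    then have "norm (S n p) = p ^ k * exp (- p) * (h (e n * p) / h (e n))"
      using True p by (simp add: S_def abs_mult)
    also have "\<dots> \<le> p ^ k * exp (- p) * (exp 1 * (p powr (\<beta>+1) + p powr (\<beta>-1)))"
      using pu[rule_format, OF s t] epos[of n] p by (intro mult_left_mono) auto
    also have "\<dots> = W p"
      using p by (simp add: W_def powr_add powr_diff powr_realpow[symmetric] exp_minus field_simps)
    finally show ?thesis .
  qed
  have "(\<lambda>n. integral\<^sup>L lborel (S n)) \<longlonglongrightarrow> integral\<^sup>L lborel \<Phi>"
  proof (rule integral_dominated_convergence[where w = W])
    show "\<Phi> \<in> borel_measurable lborel" unfolding \<Phi>_def by measurable
    show "S n \<in> borel_measurable lborel" for n unfolding S_def by measurable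
    show "integrable lborel W"
      unfolding W_def[abs_def] using gamma_majorant_integrable[of "\<beta> + k"] \<beta> by simp
  qed (use lim bound in \<open>auto intro: always_eventually\<close>)
  then show ?thesis using \<Phi>int by (simp add: S_def[abs_def])
qed

definition laplace_moment :: "real \<Rightarrow> real \<Rightarrow> (real \<Rightarrow> real) \<Rightarrow> nat \<Rightarrow> real \<Rightarrow> real" where
  "laplace_moment a t0 f k \<epsilon> = (LINT q:{a<..a+t0}|lborel. (q - a) ^ k * exp (- (q - a) / \<epsilon>) * f q)"

lemma laplace_moment_asymptotics:
  fixes h f :: "real \<Rightarrow> real" and k :: nat
  assumes hm: "h \<in> borel_measurable borel"
    and hrv: "\<And>p. 0 < p \<Longrightarrow> ((\<lambda>t. h (t * p) / h t) \<longlongrightarrow> p powr \<beta>) (at_right 0)"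
    and t0: "t0 > 0" and hp: "\<forall>s\<in>{0<..t0}. 0 < h s"
    and pu: "\<forall>s\<in>{0<..t0}. \<forall>t\<in>{0<..t0}. h s / h t \<le> exp 1 * ((s/t) powr (\<beta>+1) + (s/t) powr (\<beta>-1))"
    and \<beta>: "\<beta> > 0"
    and hf: "\<And>s. s \<in> {0<..t0} \<Longrightarrow> f (a + s) = h s"
  shows "((\<lambda>\<epsilon>. laplace_moment a t0 f k \<epsilon> / (\<epsilon> ^ (k+1) * h \<epsilon>)) \<longlongrightarrow> Gamma (\<beta> + k + 1)) (at_right 0)"
proof (rule tendsto_at_right_sequentially[OF t0])
  fix e :: "nat \<Rightarrow> real"
  assume epos: "\<And>n. 0 < e n" and elt: "\<And>n. e n < t0" and elim: "e \<longlonglongrightarrow> 0"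
  have eq: "laplace_moment a t0 f k (e n) / (e n ^ (k+1) * h (e n))
      = integral\<^sup>L lborel (\<lambda>p. indicator {0<..t0 / e n} p * (p ^ k * exp (- p) * (h (e n * p) / h (e n))))" for n
  proof -
    have hn: "h (e n) > 0" using hp epos[of n] elt[of n] by auto
    have "laplace_moment a t0 f k (e n)
        = (LINT q:{a<..a+t0}|lborel. (q - a) ^ k * exp (- (q - a) / e n) * h (q - a))"
      unfolding laplace_moment_def
      by (rule set_lebesgue_integral_cong) (use hf in \<open>auto simp flip: hf\<close>)
    also have "\<dots> = e n ^ (k+1) * h (e n) * integral\<^sup>L lborel (\<lambda>p. indicator {0<..t0 / e n} p * (p ^ k * exp (- p) * (h (e n * p) / h (e n))))"
      using laplace_substitution[of "e n" h a t0 k] epos hn by simp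
    finally show ?thesis using hn epos[of n] by simp
  qed
  show "(\<lambda>n. laplace_moment a t0 f k (e n) / (e n ^ (k+1) * h (e n))) \<longlonglongrightarrow> Gamma (\<beta> + k + 1)"
    unfolding eq using scaled_gamma_integral_limit[OF hm hrv t0 hp pu \<beta> epos _ elim] elt
    by (simp add: less_imp_le)
qed

text \<open>Uniform bound and uniform Lipschitz constant (in the exponent \<open>q \<in> [0,2]\<close>) for the kernel
  \<open>r powr (-1-q)\<close> on \<open>r \<ge> \<delta>\<close>.\<close>
definition rpow_sup :: "real \<Rightarrow> real" where
  "rpow_sup \<delta> = max 1 ((1/\<delta>) powr 3)"

definition rpow_lip_const :: "real \<Rightarrow> real" where
  "rpow_lip_const \<delta> = 1 + rpow_sup \<delta> * \<bar>ln \<delta>\<bar>"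

lemma rpow_sup_ge_1: "rpow_sup \<delta> \<ge> 1"
  by (simp add: rpow_sup_def)

text \<open>\<open>rpow_sup \<delta>\<close> bounds \<open>r powr (-1-q)\<close>: use exponent \<open>-1\<close> if \<open>r \<ge> 1\<close>, exponent \<open>-3\<close> otherwise.\<close>
lemma rpow_bound:
  fixes r q \<delta> :: real
  assumes d: "\<delta> > 0" and r: "r \<ge> \<delta>" and q: "0 \<le> q" "q \<le> 2"
  shows "r powr (-1 - q) \<le> rpow_sup \<delta>"
proof -
  have rp: "r > 0" using d r by simp
  have e: "r powr (-1 - q) = (1/r) powr (1 + q)"
    using rp by (simp add: powr_minus_divide[of r "1 + q", simplified] powr_divide)
  show ?thesis
  proof (cases "r \<ge> 1")
    case True
    have "(1/r) powr (1 + q) \<le> 1" using True q rp by (intro powr_le1) auto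
    then show ?thesis using e by (simp add: rpow_sup_def)
  next
    case False
    have "(1/r) powr (1 + q) \<le> (1/r) powr 3" using False q rp by (intro powr_mono) (auto simp: field_simps)
    also have "\<dots> \<le> (1/\<delta>) powr 3" using r rp d by (intro powr_mono2) (auto simp: field_simps)
    finally show ?thesis using e by (simp add: rpow_sup_def)
  qed
qed

lemma exp_lipschitz: fixes a b :: real shows "\<bar>exp a - exp b\<bar> \<le> max (exp a) (exp b) * \<bar>a - b\<bar>"
proof -
  have *: "exp a - exp b \<le> exp a * (a - b)" if "b \<le> a" for a b :: real
  proof -
    have "exp a * (1 + (b - a)) \<le> exp a * exp (b - a)"
      by (intro mult_left_mono exp_ge_add_one_self) auto
    then show ?thesis by (simp add: exp_diff algebra_simps)
  qed
  show ?thesis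
    using *[of b a] *[of a b] by (cases "b \<le> a") (auto simp: max_def abs_minus_commute)
qed

lemma rpow_lipschitz:
  fixes r q a \<delta> :: real
  assumes d: "\<delta> > 0" and r: "r \<ge> \<delta>" and q: "0 \<le> a" "a \<le> q" "q \<le> 2"
  shows "\<bar>r powr (-1 - q) - r powr (-1 - a)\<bar> \<le> rpow_lip_const \<delta> * (q - a)"
proof -
  define M where "M = rpow_sup \<delta>"
  have M: "M \<ge> 1" by (simp add: M_def rpow_sup_ge_1)
  have rp: "r > 0" using d r by simp
  have L: "\<bar>r powr (-1 - q) - r powr (-1 - a)\<bar> \<le> max (r powr (-1 - q)) (r powr (-1 - a)) * ((q - a) * \<bar>ln r\<bar>)"
  proof -
    have ea: "r powr (-1 - q) = exp ((-1 - q) * ln r)" "r powr (-1 - a) = exp ((-1 - a) * ln r)"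
      using rp by (simp_all add: powr_def)
    have "(-1 - q) * ln r - (-1 - a) * ln r = -((q - a) * ln r)" by algebra
    then have d: "\<bar>(-1 - q) * ln r - (-1 - a) * ln r\<bar> = (q - a) * \<bar>ln r\<bar>"
      using q by (simp only: abs_minus_cancel abs_mult)
    show ?thesis using exp_lipschitz[of "(-1 - q) * ln r" "(-1 - a) * ln r"] unfolding ea d .
  qed
  show ?thesis
  proof (cases "r \<ge> 1")
    case True
    have "r powr (-1 - q) \<le> r powr (-1)" "r powr (-1 - a) \<le> r powr (-1)"
      using True q by (intro powr_mono; simp)+
    then have m: "max (r powr (-1 - q)) (r powr (-1 - a)) \<le> r powr (-1)" by simp
    have lr: "\<bar>ln r\<bar> \<le> r" using True rp by (simp add: ln_le_minus_one ln_bound)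
    have "max (r powr (-1 - q)) (r powr (-1 - a)) * ((q - a) * \<bar>ln r\<bar>) \<le> r powr (-1) * ((q - a) * r)"
      using m lr q by (intro mult_mono) (auto intro!: mult_left_mono)
    also have "\<dots> = q - a" using rp by (simp add: powr_minus field_simps)
    also have "\<dots> \<le> (1 + M * \<bar>ln \<delta>\<bar>) * (q - a)"
      using mult_nonneg_nonneg[of "M * \<bar>ln \<delta>\<bar>" "q - a"] q M by (simp add: algebra_simps)
    finally show ?thesis using L by (simp add: rpow_lip_const_def M_def)
  next
    case False
    have m: "max (r powr (-1 - q)) (r powr (-1 - a)) \<le> M"
      using rpow_bound[OF d r, of q] rpow_bound[OF d r, of a] q by (simp add: M_def)
    have lr: "\<bar>ln r\<bar> \<le> \<bar>ln \<delta>\<bar>" using False rp r d by (simp add: abs_if)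
    have "max (r powr (-1 - q)) (r powr (-1 - a)) * ((q - a) * \<bar>ln r\<bar>) \<le> M * ((q - a) * \<bar>ln \<delta>\<bar>)"
      using m lr q M by (intro mult_mono mult_left_mono) auto
    also have "\<dots> \<le> (1 + M * \<bar>ln \<delta>\<bar>) * (q - a)" using q by (simp add: algebra_simps)
    finally show ?thesis using L by (simp add: rpow_lip_const_def M_def)
  qed
qed

lemma bounded_times_integrable:
  fixes f u :: "real \<Rightarrow> real"
  assumes f_int: "set_integrable lborel S f" and A: "A \<subseteq> S" "A \<in> sets borel"
    and um: "u \<in> borel_measurable borel" and ub: "\<forall>q\<in>A. \<bar>u q\<bar> \<le> K"
  shows "set_integrable lborel A (\<lambda>q. u q * f q)"
proof (rule set_integrable_bound)
  have fA: "set_integrable lborel A f" by (rule set_integrable_subset[OF f_int]) (use A in auto)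
  then show "set_integrable lborel A (\<lambda>q. K * f q)" by simp
  have "(\<lambda>x. indicat_real A x *\<^sub>R f x) \<in> borel_measurable lborel"
    using fA unfolding set_integrable_def by (rule borel_measurable_integrable)
  then have "(\<lambda>x. u x * (indicat_real A x *\<^sub>R f x)) \<in> borel_measurable lborel"
    using um by (intro borel_measurable_times) auto
  then show "set_borel_measurable lborel A (\<lambda>q. u q * f q)"
    unfolding set_borel_measurable_def by (simp add: mult_ac)
  show "AE q in lborel. q \<in> A \<longrightarrow> norm (u q * f q) \<le> norm (K * f q)"
    using ub by (intro always_eventually) (auto simp: abs_mult intro!: mult_right_mono)
qed

lemma abs_set_integral_le:
  fixes D G :: "'b \<Rightarrow> real"
  assumes "set_integrable M A D" "set_integrable M A G" "\<And>x. x \<in> A \<Longrightarrow> \<bar>D x\<bar> \<le> G x"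
  shows "\<bar>LINT x:A|M. D x\<bar> \<le> (LINT x:A|M. G x)"
proof -
  have "\<bar>LINT x:A|M. D x\<bar> \<le> (LINT x:A|M. \<bar>D x\<bar>)"
    using set_integral_norm_bound[OF assms(1)] by simp
  also have "\<dots> \<le> (LINT x:A|M. G x)"
    using assms by (intro set_integral_mono) (auto intro: set_integrable_abs)
  finally show ?thesis .
qed

lemma kernel_integrable:
  fixes f :: "real \<Rightarrow> real"
  assumes f_int: "set_integrable lborel {a<..2} f" and a: "0 \<le> a"
    and S: "S \<subseteq> {a<..2}" "S \<in> sets borel"
    and \<delta>: "0 < \<delta>" and r: "\<delta> \<le> r" and \<epsilon>: "0 < \<epsilon>"
  shows "set_integrable lborel S (\<lambda>q. r powr (-1 - q) * exp (- (q - a) / \<epsilon>) * f q)"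
proof (rule bounded_times_integrable[OF f_int S, where K = "rpow_sup \<delta>"])
  show "(\<lambda>q. r powr (-1 - q) * exp (- (q - a) / \<epsilon>)) \<in> borel_measurable borel" by measurable
  show "\<forall>q\<in>S. \<bar>r powr (-1 - q) * exp (- (q - a) / \<epsilon>)\<bar> \<le> rpow_sup \<delta>"
  proof
    fix q assume "q \<in> S"
    then have q: "a < q" "q \<le> 2" using S by auto
    have "exp (- (q - a) / \<epsilon>) \<le> 1" using q \<epsilon> by (simp add: divide_nonpos_pos)
    then have "r powr (-1 - q) * exp (- (q - a) / \<epsilon>) \<le> rpow_sup \<delta> * 1"
      using rpow_bound[OF \<delta> r, of q] rpow_sup_ge_1[of \<delta>] q a by (intro mult_mono) auto
    then show "\<bar>r powr (-1 - q) * exp (- (q - a) / \<epsilon>)\<bar> \<le> rpow_sup \<delta>" by simp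
  qed
qed

lemma near_endpoint_estimate:
  fixes f :: "real \<Rightarrow> real"
  assumes a: "0 \<le> a" and t0: "0 < t0" "a + t0 \<le> 2"
    and f_int: "set_integrable lborel {a<..2} f" and f_nonneg: "\<And>q. q \<in> {a<..2} \<Longrightarrow> 0 \<le> f q"
    and \<delta>: "0 < \<delta>" and r: "\<delta> \<le> r" and \<epsilon>: "0 < \<epsilon>"
  shows "\<bar>(LINT q:{a<..a+t0}|lborel. r powr (-1 - q) * exp (- (q - a) / \<epsilon>) * f q)
            - r powr (-1 - a) * laplace_moment a t0 f 0 \<epsilon>\<bar>
         \<le> rpow_lip_const \<delta> * laplace_moment a t0 f 1 \<epsilon>"
proof -
  define S where "S = {a<..a+t0}"
  define w where "w q = exp (- (q - a) / \<epsilon>)" for q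
  have S: "S \<subseteq> {a<..2}" "S \<in> sets borel" using t0 by (auto simp: S_def)
  have wb: "0 \<le> w q" "w q \<le> 1" if "a \<le> q" for q
    using that \<epsilon> by (auto simp: w_def divide_nonpos_pos)
  have int_K: "set_integrable lborel S (\<lambda>q. r powr (-1 - q) * w q * f q)"
    unfolding w_def by (rule kernel_integrable[OF f_int a S \<delta> r \<epsilon>])
  have int_W0: "set_integrable lborel S (\<lambda>q. r powr (-1 - a) * (w q * f q))"
    by (intro set_integrable_mult_right bounded_times_integrable[OF f_int S, where K = 1])
       (use wb in \<open>auto simp: w_def S_def\<close>)
  have int_W1: "set_integrable lborel S (\<lambda>q. rpow_lip_const \<delta> * ((q - a) * w q * f q))"
  proof (intro set_integrable_mult_right)
    have "set_integrable lborel S (\<lambda>q. ((q - a) * w q) * f q)"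
    proof (rule bounded_times_integrable[OF f_int S, where K = t0])
      show "(\<lambda>q. (q - a) * w q) \<in> borel_measurable borel" unfolding w_def by measurable
      show "\<forall>q\<in>S. \<bar>(q - a) * w q\<bar> \<le> t0"
      proof
        fix q assume "q \<in> S"
        then have q: "0 \<le> q - a" "q - a \<le> t0" by (auto simp: S_def)
        then have "(q - a) * w q \<le> t0 * 1" "0 \<le> (q - a) * w q"
          using wb[of q] mult_mono[of "q - a" t0 "w q" 1] by auto
        then show "\<bar>(q - a) * w q\<bar> \<le> t0" by simp
      qed
    qed
    then show "set_integrable lborel S (\<lambda>q. (q - a) * w q * f q)" by (simp add: mult.assoc)
  qed
  define D where "D q = r powr (-1 - q) * w q * f q - r powr (-1 - a) * (w q * f q)" for q
  have "(LINT q:S|lborel. r powr (-1 - q) * w q * f q) - r powr (-1 - a) * laplace_moment a t0 f 0 \<epsilon>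
      = (LINT q:S|lborel. D q)"
    unfolding D_def using int_K int_W0
    by (simp add: laplace_moment_def S_def w_def set_integral_diff(2))
  also have "\<bar>\<dots>\<bar> \<le> (LINT q:S|lborel. rpow_lip_const \<delta> * ((q - a) * w q * f q))"
  proof (rule abs_set_integral_le)
    show "set_integrable lborel S D" unfolding D_def using int_K int_W0 by (rule set_integral_diff(1))
    show "set_integrable lborel S (\<lambda>q. rpow_lip_const \<delta> * ((q - a) * w q * f q))" by (rule int_W1)
    fix q assume q: "q \<in> S"
    then have q': "a < q" "q \<le> 2" using S by auto
    have "D q = (r powr (-1 - q) - r powr (-1 - a)) * (w q * f q)"
      by (simp add: D_def algebra_simps)
    then have "\<bar>D q\<bar> = \<bar>r powr (-1 - q) - r powr (-1 - a)\<bar> * (w q * f q)"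
      using wb[of q] f_nonneg[of q] q' by (simp add: abs_mult)
    also have "\<dots> \<le> rpow_lip_const \<delta> * (q - a) * (w q * f q)"
      using rpow_lipschitz[OF \<delta> r a, of q] wb[of q] f_nonneg[of q] q' by (intro mult_right_mono) auto
    finally show "\<bar>D q\<bar> \<le> rpow_lip_const \<delta> * ((q - a) * w q * f q)" by (simp add: mult_ac)
  qed
  also have "\<dots> = rpow_lip_const \<delta> * laplace_moment a t0 f 1 \<epsilon>"
    by (simp add: laplace_moment_def S_def w_def mult_ac)
  finally show ?thesis by (simp add: S_def w_def)
qed

text \<open>Away from the endpoint the weight \<open>exp (-(q-a)/\<epsilon>)\<close> is at most \<open>exp (-t\<^sub>0/\<epsilon>)\<close>, and \<open>f\<close> has
  mass at most one there.\<close>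
lemma far_from_endpoint_estimate:
  fixes f :: "real \<Rightarrow> real"
  assumes a: "0 \<le> a" and t0: "0 < t0" "a + t0 \<le> 2"
    and f_int: "set_integrable lborel {a<..2} f" and f_nonneg: "\<And>q. q \<in> {a<..2} \<Longrightarrow> 0 \<le> f q"
    and f_one: "(LINT q:{a<..2}|lborel. f q) = 1"
    and \<delta>: "0 < \<delta>" and r: "\<delta> \<le> r" and \<epsilon>: "0 < \<epsilon>"
  shows "\<bar>LINT q:{a+t0<..2}|lborel. r powr (-1 - q) * exp (- (q - a) / \<epsilon>) * f q\<bar>
         \<le> rpow_sup \<delta> * exp (- t0 / \<epsilon>)"
proof -
  define X where "X = rpow_sup \<delta> * exp (- t0 / \<epsilon>)"
  have split: "{a<..2} = {a<..a+t0} \<union> {a+t0<..2}" "{a<..a+t0} \<inter> {a+t0<..2} = {}"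
    using t0 by auto
  have int_f: "set_integrable lborel {a<..a+t0} f" "set_integrable lborel {a+t0<..2} f"
    using t0 by (auto intro: set_integrable_subset[OF f_int])
  have mass: "(LINT q:{a+t0<..2}|lborel. f q) \<le> 1"
  proof -
    have "1 = (LINT q:{a<..a+t0}|lborel. f q) + (LINT q:{a+t0<..2}|lborel. f q)"
      unfolding f_one[symmetric] split(1) by (rule set_integral_Un[OF split(2) int_f])
    moreover have "0 \<le> (LINT q:{a<..a+t0}|lborel. f q)"
      unfolding set_lebesgue_integral_def
      by (rule Bochner_Integration.integral_nonneg) (use f_nonneg t0 in \<open>auto simp: indicator_def\<close>)
    ultimately show ?thesis by linarith
  qed
  have "\<bar>LINT q:{a+t0<..2}|lborel. r powr (-1 - q) * exp (- (q - a) / \<epsilon>) * f q\<bar>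
      \<le> (LINT q:{a+t0<..2}|lborel. X * f q)"
  proof (rule abs_set_integral_le)
    show "set_integrable lborel {a+t0<..2} (\<lambda>q. r powr (-1 - q) * exp (- (q - a) / \<epsilon>) * f q)"
      by (rule kernel_integrable[OF f_int a _ _ \<delta> r \<epsilon>]) (use t0 in auto)
    show "set_integrable lborel {a+t0<..2} (\<lambda>q. X * f q)" using int_f(2) by simp
    fix q assume q: "q \<in> {a+t0<..2}"
    have "- (q - a) / \<epsilon> \<le> - t0 / \<epsilon>"
      using divide_right_mono[of "- (q - a)" "- t0" \<epsilon>] q \<epsilon> by auto
    then have "exp (- (q - a) / \<epsilon>) \<le> exp (- t0 / \<epsilon>)" by simp
    then have "r powr (-1 - q) * exp (- (q - a) / \<epsilon>) \<le> X"
      unfolding X_def using rpow_bound[OF \<delta> r, of q] rpow_sup_ge_1[of \<delta>] q a t0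
      by (intro mult_mono) auto
    then show "\<bar>r powr (-1 - q) * exp (- (q - a) / \<epsilon>) * f q\<bar> \<le> X * f q"
      using f_nonneg[of q] q t0 by (simp add: abs_mult mult_right_mono)
  qed
  also have "\<dots> \<le> X"
    using mult_left_le[OF mass, of X] rpow_sup_ge_1[of \<delta>] by (simp add: X_def)
  finally show ?thesis by (simp add: X_def)
qed

lemma laplace_error_estimate:
  fixes f :: "real \<Rightarrow> real"
  assumes a: "0 \<le> a" and t0: "0 < t0" "a + t0 \<le> 2"
    and f_int: "set_integrable lborel {a<..2} f" and f_nonneg: "\<And>q. q \<in> {a<..2} \<Longrightarrow> 0 \<le> f q"
    and f_one: "(LINT q:{a<..2}|lborel. f q) = 1"
    and \<delta>: "0 < \<delta>" and r: "\<delta> \<le> r" and \<epsilon>: "0 < \<epsilon>"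
  shows "\<bar>(LINT q:{a<..2}|lborel. r powr (-1 - q) * exp (- (q - a) / \<epsilon>) * f q) - c * r powr (-1 - a)\<bar>
         \<le> rpow_sup \<delta> * \<bar>laplace_moment a t0 f 0 \<epsilon> - c\<bar> + rpow_lip_const \<delta> * laplace_moment a t0 f 1 \<epsilon>
            + rpow_sup \<delta> * exp (- t0 / \<epsilon>)"
proof -
  define K where "K q = r powr (-1 - q) * exp (- (q - a) / \<epsilon>) * f q" for q
  define m0 where "m0 = laplace_moment a t0 f 0 \<epsilon>"
  have split: "{a<..2} = {a<..a+t0} \<union> {a+t0<..2}" "{a<..a+t0} \<inter> {a+t0<..2} = {}"
    using t0 by auto
  have "(LINT q:{a<..2}|lborel. K q) = (LINT q:{a<..a+t0}|lborel. K q) + (LINT q:{a+t0<..2}|lborel. K q)"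
    unfolding split(1) K_def
    by (intro set_integral_Un[OF split(2)] kernel_integrable[OF f_int a _ _ \<delta> r \<epsilon>]) (use t0 in auto)
  then have "(LINT q:{a<..2}|lborel. K q) - c * r powr (-1 - a)
      = ((LINT q:{a<..a+t0}|lborel. K q) - r powr (-1 - a) * m0) + r powr (-1 - a) * (m0 - c)
        + (LINT q:{a+t0<..2}|lborel. K q)"
    by (simp add: algebra_simps)
  moreover have "\<bar>r powr (-1 - a) * (m0 - c)\<bar> \<le> rpow_sup \<delta> * \<bar>m0 - c\<bar>"
    unfolding abs_mult using rpow_bound[OF \<delta> r, of a] a t0 by (intro mult_right_mono) auto
  ultimately show ?thesis
    using near_endpoint_estimate[OF a t0 f_int f_nonneg \<delta> r \<epsilon>]
      far_from_endpoint_estimate[OF a t0 f_int f_nonneg f_one \<delta> r \<epsilon>]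
    unfolding K_def m0_def by linarith
qed

definition error_majorant ::
    "real \<Rightarrow> real \<Rightarrow> (real \<Rightarrow> real) \<Rightarrow> (real \<Rightarrow> real) \<Rightarrow> real \<Rightarrow> real \<Rightarrow> real \<Rightarrow> real" where
  "error_majorant a t0 f h \<beta> \<delta> \<epsilon> =
     rpow_sup \<delta> * \<bar>laplace_moment a t0 f 0 \<epsilon> / (\<epsilon> * h \<epsilon>) - Gamma (\<beta> + 1)\<bar> / Gamma (\<beta> + 1)
   + rpow_lip_const \<delta> * \<epsilon> * (laplace_moment a t0 f 1 \<epsilon> / (\<epsilon> ^ 2 * h \<epsilon>)) / Gamma (\<beta> + 1)
   + rpow_sup \<delta> / Gamma (\<beta> + 1) * (exp (- t0 / \<epsilon>) / (\<epsilon> * h \<epsilon>))"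

lemma normalized_error_le:
  fixes f h :: "real \<Rightarrow> real"
  assumes a: "0 \<le> a" and t0: "0 < t0" "a + t0 \<le> 2"
    and f_int: "set_integrable lborel {a<..2} f" and f_nonneg: "\<And>q. q \<in> {a<..2} \<Longrightarrow> 0 \<le> f q"
    and f_one: "(LINT q:{a<..2}|lborel. f q) = 1"
    and \<delta>: "0 < \<delta>" and r: "\<delta> \<le> r" and \<epsilon>: "0 < \<epsilon>" and h\<epsilon>: "0 < h \<epsilon>" and \<beta>: "-1 < \<beta>"
  shows "\<bar>(LINT q:{a<..2}|lborel. r powr (-1 - q) * exp (- (q - a) / \<epsilon>) * f q)
            - \<epsilon> * h \<epsilon> * Gamma (\<beta> + 1) * r powr (-1 - a)\<bar> / (\<epsilon> * h \<epsilon> * Gamma (\<beta> + 1))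
         \<le> error_majorant a t0 f h \<beta> \<delta> \<epsilon>"
proof -
  define \<Gamma>1 where "\<Gamma>1 = Gamma (\<beta> + 1)"
  define G where "G = \<epsilon> * h \<epsilon> * \<Gamma>1"
  define m0 where "m0 = laplace_moment a t0 f 0 \<epsilon>"
  define m1 where "m1 = laplace_moment a t0 f 1 \<epsilon>"
  have \<Gamma>1: "\<Gamma>1 > 0" using \<beta> by (simp add: \<Gamma>1_def Gamma_real_pos)
  have G: "G > 0" using \<epsilon> h\<epsilon> \<Gamma>1 by (simp add: G_def)
  have t1: "\<bar>m0 - G\<bar> / G = \<bar>m0 / (\<epsilon> * h \<epsilon>) - \<Gamma>1\<bar> / \<Gamma>1"
  proof -
    have "m0 / (\<epsilon> * h \<epsilon>) - \<Gamma>1 = (m0 - G) / (\<epsilon> * h \<epsilon>)"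
      using \<epsilon> h\<epsilon> by (simp add: G_def field_simps)
    then show ?thesis using \<epsilon> h\<epsilon> \<Gamma>1 by (simp add: G_def abs_divide field_simps)
  qed
  have t2: "m1 / G = \<epsilon> * (m1 / (\<epsilon> ^ 2 * h \<epsilon>)) / \<Gamma>1"
    using \<epsilon> h\<epsilon> \<Gamma>1 by (simp add: G_def field_simps power2_eq_square)
  have t3: "exp (- t0 / \<epsilon>) / G = exp (- t0 / \<epsilon>) / (\<epsilon> * h \<epsilon>) / \<Gamma>1"
    by (simp add: G_def)
  have "(rpow_sup \<delta> * \<bar>m0 - G\<bar> + rpow_lip_const \<delta> * m1 + rpow_sup \<delta> * exp (- t0 / \<epsilon>)) / G
      = rpow_sup \<delta> * (\<bar>m0 - G\<bar> / G) + rpow_lip_const \<delta> * (m1 / G) + rpow_sup \<delta> * (exp (- t0 / \<epsilon>) / G)"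
    by (simp add: add_divide_distrib)
  also have "\<dots> = error_majorant a t0 f h \<beta> \<delta> \<epsilon>"
    unfolding error_majorant_def m0_def[symmetric] m1_def[symmetric] \<Gamma>1_def[symmetric] t1 t2 t3
    by (simp add: mult.assoc)
  finally have majorant: "(rpow_sup \<delta> * \<bar>m0 - G\<bar> + rpow_lip_const \<delta> * m1 + rpow_sup \<delta> * exp (- t0 / \<epsilon>)) / G
      = error_majorant a t0 f h \<beta> \<delta> \<epsilon>" .
  have "\<bar>(LINT q:{a<..2}|lborel. r powr (-1 - q) * exp (- (q - a) / \<epsilon>) * f q) - G * r powr (-1 - a)\<bar>
      \<le> rpow_sup \<delta> * \<bar>m0 - G\<bar> + rpow_lip_const \<delta> * m1 + rpow_sup \<delta> * exp (- t0 / \<epsilon>)"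
    unfolding m0_def m1_def by (rule laplace_error_estimate[OF a t0 f_int f_nonneg f_one \<delta> r \<epsilon>])
  then have "\<bar>(LINT q:{a<..2}|lborel. r powr (-1 - q) * exp (- (q - a) / \<epsilon>) * f q) - G * r powr (-1 - a)\<bar> / G
      \<le> error_majorant a t0 f h \<beta> \<delta> \<epsilon>"
    unfolding majorant[symmetric] using G by (intro divide_right_mono) auto
  then show ?thesis by (simp add: G_def \<Gamma>1_def)
qed

text \<open>Potter's lower bound makes the tail \<open>exp (-t\<^sub>0/\<epsilon>)\<close> negligible against the scale \<open>\<epsilon> h(\<epsilon>)\<close>.\<close>
lemma tail_negligible:
  fixes h :: "real \<Rightarrow> real"
  assumes t0: "t0 > 0" and \<beta>: "\<beta> > 0" and ht0: "h t0 > 0"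
    and pl: "\<And>s. s \<in> {0<..t0} \<Longrightarrow> exp (-1) * (s/t0) powr \<beta> / (s/t0 + t0/s) \<le> h s / h t0"
  shows "((\<lambda>\<epsilon>. exp (- t0 / \<epsilon>) / (\<epsilon> * h \<epsilon>)) \<longlongrightarrow> 0) (at_right 0)"
proof -
  define Q where "Q \<epsilon> = (\<epsilon>/t0) powr \<beta> / (\<epsilon>/t0 + t0/\<epsilon>)" for \<epsilon>
  define R where "R \<epsilon> = exp (- t0 / \<epsilon>) / (\<epsilon> * Q \<epsilon>) / (exp (-1) * h t0)" for \<epsilon>
  have "((\<lambda>\<epsilon>. exp (- t0 / \<epsilon>) / (\<epsilon> * Q \<epsilon>)) \<longlongrightarrow> 0) (at_right 0)"
    unfolding Q_def using t0 \<beta> by real_asymp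
  then have "(R \<longlongrightarrow> 0 / (exp (-1) * h t0)) (at_right 0)"
    unfolding R_def using ht0 by (intro tendsto_divide) auto
  then have Rlim: "(R \<longlongrightarrow> 0) (at_right 0)" by simp
  have bound: "0 \<le> exp (- t0 / \<epsilon>) / (\<epsilon> * h \<epsilon>) \<and> exp (- t0 / \<epsilon>) / (\<epsilon> * h \<epsilon>) \<le> R \<epsilon>"
    if \<epsilon>: "\<epsilon> \<in> {0<..t0}" for \<epsilon>
  proof -
    have Q: "Q \<epsilon> > 0" using \<epsilon> t0 unfolding Q_def by (intro divide_pos_pos add_pos_pos) auto
    have "exp (-1) * Q \<epsilon> \<le> h \<epsilon> / h t0" using pl[OF \<epsilon>] by (simp add: Q_def)
    then have low: "h t0 * (exp (-1) * Q \<epsilon>) \<le> h \<epsilon>" using ht0 by (simp add: field_simps)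
    have pos: "0 < \<epsilon> * (h t0 * (exp (-1) * Q \<epsilon>))" using \<epsilon> ht0 Q by simp
    have h\<epsilon>: "0 < h \<epsilon>" using low ht0 Q by (smt (verit) mult_pos_pos exp_gt_zero)
    have "exp (- t0 / \<epsilon>) / (\<epsilon> * h \<epsilon>) \<le> exp (- t0 / \<epsilon>) / (\<epsilon> * (h t0 * (exp (-1) * Q \<epsilon>)))"
      using low pos \<epsilon> h\<epsilon> by (intro divide_left_mono mult_left_mono) auto
    also have "\<dots> = R \<epsilon>" by (simp add: R_def field_simps)
    finally show ?thesis using \<epsilon> h\<epsilon> by simp
  qed
  have near0: "\<forall>\<^sub>F \<epsilon> in at_right 0. \<epsilon> \<in> {0<..t0}"
    using t0 by (auto simp: eventually_at_right_field intro!: exI[of _ t0])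
  have lower: "\<forall>\<^sub>F \<epsilon> in at_right 0. 0 \<le> exp (- t0 / \<epsilon>) / (\<epsilon> * h \<epsilon>)"
    using near0 by eventually_elim (use bound in blast)
  have upper: "\<forall>\<^sub>F \<epsilon> in at_right 0. exp (- t0 / \<epsilon>) / (\<epsilon> * h \<epsilon>) \<le> R \<epsilon>"
    using near0 by eventually_elim (use bound in blast)
  show ?thesis by (rule tendsto_sandwich[OF lower upper tendsto_const Rlim])
qed

lemma error_majorant_tendsto_zero:
  fixes h f :: "real \<Rightarrow> real"
  assumes hm: "h \<in> borel_measurable borel"
    and hrv: "\<And>p. 0 < p \<Longrightarrow> ((\<lambda>t. h (t * p) / h t) \<longlongrightarrow> p powr \<beta>) (at_right 0)"
    and t0: "t0 > 0" and hp: "\<forall>s\<in>{0<..t0}. 0 < h s"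
    and pu: "\<forall>s\<in>{0<..t0}. \<forall>t\<in>{0<..t0}. h s / h t \<le> exp 1 * ((s/t) powr (\<beta>+1) + (s/t) powr (\<beta>-1))"
    and pl: "\<And>s. s \<in> {0<..t0} \<Longrightarrow> exp (-1) * (s/t0) powr \<beta> / (s/t0 + t0/s) \<le> h s / h t0"
    and \<beta>: "\<beta> > 0"
    and hf: "\<And>s. s \<in> {0<..t0} \<Longrightarrow> f (a + s) = h s"
  shows "(error_majorant a t0 f h \<beta> \<delta> \<longlongrightarrow> 0) (at_right 0)"
proof -
  have \<Gamma>1: "Gamma (\<beta> + 1) > 0" using \<beta> by (simp add: Gamma_real_pos)
  have m0: "((\<lambda>\<epsilon>. laplace_moment a t0 f 0 \<epsilon> / (\<epsilon> * h \<epsilon>)) \<longlongrightarrow> Gamma (\<beta> + 1)) (at_right 0)"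
    using laplace_moment_asymptotics[OF hm hrv t0 hp pu \<beta> hf, of 0] by simp
  have m1: "((\<lambda>\<epsilon>. laplace_moment a t0 f 1 \<epsilon> / (\<epsilon> ^ 2 * h \<epsilon>)) \<longlongrightarrow> Gamma (\<beta> + 2)) (at_right 0)"
    using laplace_moment_asymptotics[OF hm hrv t0 hp pu \<beta> hf, of 1] by (simp add: add.assoc power2_eq_square)
  have tail: "((\<lambda>\<epsilon>. exp (- t0 / \<epsilon>) / (\<epsilon> * h \<epsilon>)) \<longlongrightarrow> 0) (at_right 0)"
    using tail_negligible[OF t0 \<beta> _ pl] hp t0 by auto
  have "(error_majorant a t0 f h \<beta> \<delta> \<longlongrightarrow>
      rpow_sup \<delta> * \<bar>Gamma (\<beta> + 1) - Gamma (\<beta> + 1)\<bar> / Gamma (\<beta> + 1)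
      + rpow_lip_const \<delta> * 0 * Gamma (\<beta> + 2) / Gamma (\<beta> + 1) + rpow_sup \<delta> / Gamma (\<beta> + 1) * 0) (at_right 0)"
    unfolding error_majorant_def[abs_def] using \<Gamma>1
    by (intro tendsto_intros m0 m1 tail tendsto_ident_at) auto
  then show ?thesis by simp
qed

lemma shifted_density_regular_variation:
  fixes f h :: "real \<Rightarrow> real" and a \<beta> :: real
  assumes a: "a < 2"
    and f_meas: "set_borel_measurable lborel {a<..2} f"
    and f_pos: "\<forall>\<^sub>F t in at_right 0. 0 < f (t + a)"
    and f_rv: "\<And>p. 0 < p \<Longrightarrow> ((\<lambda>t. f (t * p + a) / f (t + a)) \<longlongrightarrow> p powr \<beta>) (at_right 0)"
    and h_def: "h = (\<lambda>s. indicator {a<..2} (a + s) * f (a + s))"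
  shows "h \<in> borel_measurable borel"
    and "\<forall>\<^sub>F t in at_right 0. 0 < h t"
    and "\<And>p. 0 < p \<Longrightarrow> ((\<lambda>t. h (t * p) / h t) \<longlongrightarrow> p powr \<beta>) (at_right 0)"
    and "\<And>s. 0 < s \<Longrightarrow> s \<le> 2 - a \<Longrightarrow> h s = f (a + s)"
proof -
  have "(\<lambda>q. indicator {a<..2} q * f q) \<in> borel_measurable borel"
    using f_meas unfolding set_borel_measurable_def by simp
  then show "h \<in> borel_measurable borel" unfolding h_def by measurable
  show hf: "h s = f (a + s)" if "0 < s" "s \<le> 2 - a" for s
    using that by (simp add: h_def)
  have small: "\<forall>\<^sub>F t in at_right 0. 0 < t \<and> t * c \<le> 2 - a" if "c > 0" for c
    using a that by (auto simp: eventually_at_right_field field_simps intro!: exI[of _ "(2 - a) / c"])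
  show "\<forall>\<^sub>F t in at_right 0. 0 < h t"
    using f_pos small[OF zero_less_one] by eventually_elim (simp add: hf add.commute)
  show "((\<lambda>t. h (t * p) / h t) \<longlongrightarrow> p powr \<beta>) (at_right 0)" if p: "0 < p" for p
  proof (rule tendsto_cong[THEN iffD1, OF _ f_rv[OF p]])
    show "\<forall>\<^sub>F t in at_right 0. f (t * p + a) / f (t + a) = h (t * p) / h t"
      using small[OF p] small[OF zero_less_one]
      by eventually_elim (simp add: hf add.commute p zero_less_mult_iff)
  qed
qed

lemma Iint_laplace_form:
  assumes a: "0 < a" and n: "2 \<le> n"
  shows "Iint a f n y
    = (LINT q:{a<..2}|lborel. norm y powr (-1 - q) * exp (- (q - a) / (a / ln (real n))) * f q)"
proof -
  have lnpos: "ln (real n) > 0" using n by simp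
  have "real n powr (1 - q / a) = exp (- (q - a) / (a / ln (real n)))" for q
  proof -
    have "(1 - q / a) * ln (real n) = - (q - a) / (a / ln (real n))"
      using a lnpos by (simp add: field_simps)
    then show ?thesis using n by (simp add: powr_def)
  qed
  then show ?thesis by (simp add: Iint_def)
qed

lemma Eerr_ratio_le_majorant:
  fixes f h :: "real \<Rightarrow> real" and y :: "'a::real_normed_vector"
  assumes a: "0 < a" and t0: "0 < t0" "a + t0 \<le> 2"
    and f_int: "set_integrable lborel {a<..2} f" and f_nonneg: "\<And>q. q \<in> {a<..2} \<Longrightarrow> 0 \<le> f q"
    and f_one: "(LINT q:{a<..2}|lborel. f q) = 1"
    and hp: "\<forall>s\<in>{0<..t0}. 0 < h s" and hf: "\<And>s. s \<in> {0<..t0} \<Longrightarrow> f (a + s) = h s"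
    and \<beta>: "0 < \<beta>" and \<delta>: "0 < \<delta>" and y: "\<delta> \<le> norm y"
    and n: "2 \<le> n" and small: "a / ln (real n) \<le> t0"
  shows "0 \<le> \<bar>Eerr a f \<beta> n y\<bar> / gtilde a f \<beta> n"
    and "\<bar>Eerr a f \<beta> n y\<bar> / gtilde a f \<beta> n \<le> error_majorant a t0 f h \<beta> \<delta> (a / ln (real n))"
proof -
  define \<epsilon> where "\<epsilon> = a / ln (real n)"
  have \<epsilon>: "0 < \<epsilon>" "\<epsilon> \<le> t0" using a n small by (auto simp: \<epsilon>_def)
  have h\<epsilon>: "0 < h \<epsilon>" using hp \<epsilon> by auto
  have gt: "gtilde a f \<beta> n = \<epsilon> * h \<epsilon> * Gamma (\<beta> + 1)"
    using hf[of \<epsilon>] \<epsilon> by (simp add: gtilde_def \<epsilon>_def add.commute)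
  then show "0 \<le> \<bar>Eerr a f \<beta> n y\<bar> / gtilde a f \<beta> n" using \<epsilon> h\<epsilon> \<beta> by (simp add: Gamma_real_pos)
  show "\<bar>Eerr a f \<beta> n y\<bar> / gtilde a f \<beta> n \<le> error_majorant a t0 f h \<beta> \<delta> (a / ln (real n))"
    using normalized_error_le[where h = h, OF less_imp_le[OF a] t0 f_int f_nonneg f_one \<delta> y \<epsilon>(1) h\<epsilon>] \<beta>
    unfolding Eerr_def Iint_laplace_form[OF a n] gt \<epsilon>_def by simp
qed

lemma SUP_ereal_tendsto_zero:
  fixes F :: "'n \<Rightarrow> 'y \<Rightarrow> real" and B :: "'n \<Rightarrow> real"
  assumes ne: "Y \<noteq> {}"
    and bd: "\<forall>\<^sub>F n in G. \<forall>y\<in>Y. 0 \<le> F n y \<and> F n y \<le> B n"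
    and B: "(B \<longlongrightarrow> 0) G"
  shows "((\<lambda>n. SUP y\<in>Y. ereal (F n y)) \<longlongrightarrow> 0) G"
proof (rule tendsto_sandwich[where f = "\<lambda>_. 0" and h = "\<lambda>n. ereal (B n)"])
  show "\<forall>\<^sub>F n in G. 0 \<le> (SUP y\<in>Y. ereal (F n y))"
    using bd by eventually_elim (use ne in \<open>auto intro: SUP_upper2\<close>)
  show "\<forall>\<^sub>F n in G. (SUP y\<in>Y. ereal (F n y)) \<le> ereal (B n)"
    using bd by eventually_elim (auto intro: SUP_least)
  show "((\<lambda>n. ereal (B n)) \<longlongrightarrow> 0) G"
    using B by (simp add: zero_ereal_def)
qed simp

theorem mainTheorem1:
  fixes ao \<beta> \<delta> :: real and f :: "real \<Rightarrow> real"
  assumes ao_pos: "0 < ao" and ao_lt: "ao < 2"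
    and f_meas: "set_borel_measurable lborel {ao<..2} f"
    and f_nonneg: "\<And>q. q \<in> {ao<..2} \<Longrightarrow> 0 \<le> f q"
    and f_int: "set_integrable lborel {ao<..2} f"
    and f_one: "(LINT q:{ao<..2}|lborel. f q) = 1"
    and \<beta>_pos: "0 < \<beta>"
    and f_pos: "\<forall>\<^sub>F t in at_right 0. 0 < f (t + ao)"
    and f_rv: "\<And>p. 0 < p \<Longrightarrow> ((\<lambda>t. f (t * p + ao) / f (t + ao)) \<longlongrightarrow> p powr \<beta>) (at_right 0)"
    and \<delta>_pos: "0 < \<delta>"
  shows "((\<lambda>n::nat. SUP y\<in>{y::'a::euclidean_space. \<delta> \<le> norm y}.
             ereal (\<bar>Eerr ao f \<beta> n y\<bar> / gtilde ao f \<beta> n)) \<longlongrightarrow> 0) sequentially"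
proof -
  define h where "h = (\<lambda>s. indicator {ao<..2} (ao + s) * f (ao + s))"
  note h = shifted_density_regular_variation[OF ao_lt f_meas f_pos f_rv h_def]
  obtain t0 where t0: "0 < t0" "t0 \<le> (2 - ao) / 2" and hp: "\<forall>s\<in>{0<..t0}. 0 < h s"
    and potter: "\<forall>s\<in>{0<..t0}. \<forall>t\<in>{0<..t0}.
        h s / h t \<le> exp 1 * ((s/t) powr (\<beta>+1) + (s/t) powr (\<beta>-1)) \<and>
        exp (-1) * (s/t) powr \<beta> / (s/t + t/s) \<le> h s / h t"
    using potter_bounds[OF h(1,2,3), of "(2 - ao) / 2"] ao_lt by auto
  have t0_in: "ao + t0 \<le> 2" using t0 by simp
  have hf: "f (ao + s) = h s" if "s \<in> {0<..t0}" for s using h(4)[of s] that t0 by auto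
  have majorant_0: "(error_majorant ao t0 f h \<beta> \<delta> \<longlongrightarrow> 0) (at_right 0)"
    by (rule error_majorant_tendsto_zero[OF h(1,3) t0(1) hp _ _ \<beta>_pos hf]) (use potter t0 in auto)
  have \<epsilon>_lim: "filterlim (\<lambda>n::nat. ao / ln (real n)) (at_right 0) sequentially"
    using ao_pos by real_asymp
  have "(\<lambda>n::nat. ao / ln (real n)) \<longlonglongrightarrow> 0" by real_asymp
  then have "\<forall>\<^sub>F n in sequentially. ao / ln (real n) < t0" using t0(1) by (rule order_tendstoD(2))
  then have "\<forall>\<^sub>F n in sequentially. 2 \<le> n \<and> ao / ln (real n) \<le> t0"
    using eventually_ge_at_top[of 2] by eventually_elim auto
  then have bound: "\<forall>\<^sub>F n in sequentially. \<forall>y\<in>{y::'a. \<delta> \<le> norm y}.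
      0 \<le> \<bar>Eerr ao f \<beta> n y\<bar> / gtilde ao f \<beta> n \<and>
      \<bar>Eerr ao f \<beta> n y\<bar> / gtilde ao f \<beta> n \<le> error_majorant ao t0 f h \<beta> \<delta> (ao / ln (real n))"
    by eventually_elim
      (use Eerr_ratio_le_majorant[OF ao_pos t0(1) t0_in f_int f_nonneg f_one hp hf \<beta>_pos \<delta>_pos] in blast)
  obtain y0 :: 'a where "norm y0 = \<delta>" using vector_choose_size \<delta>_pos by (metis less_imp_le)
  then have "{y::'a. \<delta> \<le> norm y} \<noteq> {}" by auto
  then show ?thesis
    using SUP_ereal_tendsto_zero[OF _ bound filterlim_compose[OF majorant_0 \<epsilon>_lim]] by simp
qed

end
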